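(* Let $(\mathbb{X},d,\mu)$ be a metric measure space such that $\mu$ is ring-continuous. Let $\Omega\subset\mathbb{X}$ be a domain and $\varrho$ a continuous admissible radius function in $\Omega$. Then $\mathcal{M}$ maps $L^\infty(\Omega)$ into $C(\Omega)$.
   Context: A metric measure space $(\mathbb{X},d,\mu)$ is a metric space with a positive Borel regular measure $\mu$ with $0<\mu(B)<\infty$ for every ball $B$. $\mu$ is ring-continuous if for each $x\in\mathbb{X}$ the function $r\mapsto\mu(B(x,r))$ is continuous on $(0,\infty)$. An admissible radius function in $\Omega$ is $\varrho\in C(\overline\Omega)$, $\varrho\ge0$, with $0<\varrho(x)\leq\mathrm{dist}(x,\partial\Omega)$ for $x\in\Omega$ and $\varrho=0$ exactly on $\partial\Omega$. For $x\in\Omega$, $B_x=\overline{B}(x,\varrho(x))$ and $\mathcal{M}u(x)=\frac{1}{\mu(B_x)}\int_{B_x}u\,d\mu$. *)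

theory Defs
  imports "HOL-Analysis.Analysis"
begin

definition metric_measure_space :: "'a::metric_space measure \<Rightarrow> bool" where
  "metric_measure_space M \<longleftrightarrow> sets M = sets borel \<and>
     (\<forall>x r. 0 < r \<longrightarrow> 0 < emeasure M (ball x r) \<and> emeasure M (ball x r) < \<infinity>)"

definition ring_continuous :: "'a::metric_space measure \<Rightarrow> bool" where
  "ring_continuous M \<longleftrightarrow> (\<forall>x. continuous_on {0<..} (\<lambda>r. measure M (ball x r)))"

definition domain :: "'a::metric_space set \<Rightarrow> bool" where
  "domain \<Omega> \<longleftrightarrow> open \<Omega> \<and> connected \<Omega> \<and> \<Omega> \<noteq> {}"

text \<open>Admissible radius function. dist(x, boundary) is infdist; when the boundary
  is empty the distance is +infinity, so the upper bound is vacuous.\<close>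
definition admissible_radius :: "'a::metric_space set \<Rightarrow> ('a \<Rightarrow> real) \<Rightarrow> bool" where
  "admissible_radius \<Omega> \<rho> \<longleftrightarrow> continuous_on (closure \<Omega>) \<rho> \<and>
     (\<forall>x\<in>closure \<Omega>. 0 \<le> \<rho> x) \<and>
     (\<forall>x\<in>\<Omega>. 0 < \<rho> x \<and> (frontier \<Omega> \<noteq> {} \<longrightarrow> \<rho> x \<le> infdist x (frontier \<Omega>))) \<and>
     (\<forall>x\<in>closure \<Omega>. \<rho> x = 0 \<longleftrightarrow> x \<in> frontier \<Omega>)"

definition Linfty_on :: "'a::metric_space measure \<Rightarrow> 'a set \<Rightarrow> ('a \<Rightarrow> real) \<Rightarrow> bool" where
  "Linfty_on M \<Omega> u \<longleftrightarrow> u \<in> borel_measurable (restrict_space M \<Omega>) \<and>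
     (\<exists>C. AE x in M. x \<in> \<Omega> \<longrightarrow> \<bar>u x\<bar> \<le> C)"

definition avg_op :: "'a::metric_space measure \<Rightarrow> 'a set \<Rightarrow> ('a \<Rightarrow> real) \<Rightarrow> ('a \<Rightarrow> real) \<Rightarrow> 'a \<Rightarrow> real" where
  "avg_op M \<Omega> \<rho> u x = (1 / measure M (cball x (\<rho> x))) *
     set_lebesgue_integral M (cball x (\<rho> x)) (\<lambda>y. indicator \<Omega> y * u y)"

end

theory Submission
  imports Defs
begin

(*
  Ring continuity forces every sphere, i.e. closed minus open ball, to be mu-null:
  mu(cball x r) <= mu(ball x s) for all s > r, and the right-hand side tends to mu(ball x r).
  Hence, as z -> x, the indicators of B_z = cball z (rho z) converge to that of B_x almost
  everywhere (rho being continuous), and they are eventually dominated by the indicator of one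
  fixed ball of finite measure. Dominated convergence makes both z |-> integral of u over B_z
  and z |-> mu(B_z) continuous at x; the latter is positive, so their quotient is continuous.
*)

lemma metric_measure_space_sets_eq:
  assumes "metric_measure_space M"
  shows "sets M = sets borel"
  using assms unfolding metric_measure_space_def by simp

lemma metric_measure_space_cball_fmeasurable:
  assumes "metric_measure_space M"
  shows "cball x r \<in> fmeasurable M"
proof -
  have sets: "sets M = sets borel"
    using assms by (rule metric_measure_space_sets_eq)
  have "emeasure M (cball x r) \<le> emeasure M (ball x (\<bar>r\<bar> + 1))"
    using sets by (intro emeasure_mono) auto
  also have "\<dots> < \<infinity>"
    using assms unfolding metric_measure_space_def by simp
  finally show ?thesis
    using sets by (simp add: fmeasurable_def)
qed

lemma metric_measure_space_measure_cball_pos: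
  assumes "metric_measure_space M" and "0 < r"
  shows "0 < measure M (cball x r)"
proof -
  have sets: "sets M = sets borel"
    using assms(1) by (rule metric_measure_space_sets_eq)
  have "0 < emeasure M (ball x r)"
    using assms unfolding metric_measure_space_def by simp
  also have "\<dots> \<le> emeasure M (cball x r)"
    using sets by (intro emeasure_mono) auto
  finally show ?thesis
    using metric_measure_space_cball_fmeasurable[OF assms(1)]
    by (simp add: emeasure_eq_measure2 ennreal_less_iff)
qed

lemma ring_continuous_sphere_null:
  assumes mm: "metric_measure_space M" and rc: "ring_continuous M" and r: "0 < r"
  shows "cball x r - ball x r \<in> null_sets M"
proof -
  have sets: "sets M = sets borel"
    using mm by (rule metric_measure_space_sets_eq)
  have cball: "\<And>s. cball x s \<in> fmeasurable M"
    using mm by (rule metric_measure_space_cball_fmeasurable)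
  have ball: "\<And>s. ball x s \<in> fmeasurable M"
    using cball sets by (auto intro: fmeasurableI2[OF _ ball_subset_cball])
  have "measure M (cball x r) \<le> measure M (ball x r)"
  proof (rule tendsto_lowerbound)
    have "isCont (\<lambda>s. measure M (ball x s)) r"
      using rc r unfolding ring_continuous_def by (simp add: continuous_on_eq_continuous_at)
    then show "((\<lambda>s. measure M (ball x s)) \<longlongrightarrow> measure M (ball x r)) (at_right r)"
      unfolding isCont_def by (rule filterlim_mono) (auto simp: at_le)
    show "\<forall>\<^sub>F s in at_right r. measure M (cball x r) \<le> measure M (ball x s)"
      using eventually_at_right_less[of r]
    proof eventually_elim
      case (elim s)
      then show ?case
        using ball sets by (intro measure_mono_fmeasurable) (auto simp: fmeasurable_def)
    qed
  qed simp
  moreover have "measure M (cball x r - ball x r) = measure M (cball x r) - measure M (ball x r)"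
    using cball ball by (intro measure_Diff) (auto simp: fmeasurable_def less_top)
  ultimately have "measure M (cball x r - ball x r) = 0"
    using measure_mono_fmeasurable[OF ball_subset_cball fmeasurableD[OF ball] cball, of r]
    by linarith
  moreover have "cball x r - ball x r \<in> fmeasurable M"
    using cball ball by (rule fmeasurable.Diff)
  ultimately show ?thesis
    by (simp add: null_sets_def emeasure_eq_measure2 fmeasurableD)
qed

lemma tendsto_indicator_cball:
  assumes c: "(c \<longlongrightarrow> x) F" and r: "(r \<longlongrightarrow> \<rho>) F" and y: "dist x y \<noteq> \<rho>"
  shows "((\<lambda>i. indicator (cball (c i) (r i)) y :: real) \<longlongrightarrow> indicator (cball x \<rho>) y) F"
proof (rule tendsto_eventually)
  have gap: "((\<lambda>i. r i - dist (c i) y) \<longlongrightarrow> \<rho> - dist x y) F"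
    by (intro tendsto_intros c r)
  consider "dist x y < \<rho>" | "\<rho> < dist x y"
    using y by linarith
  then show "\<forall>\<^sub>F i in F. indicator (cball (c i) (r i)) y = (indicator (cball x \<rho>) y :: real)"
  proof cases
    case 1
    then have "\<forall>\<^sub>F i in F. 0 < r i - dist (c i) y"
      using order_tendstoD(1)[OF gap, of 0] 1 by simp
    then show ?thesis
      by eventually_elim (use 1 in \<open>simp add: indicator_def\<close>)
  next
    case 2
    then have "\<forall>\<^sub>F i in F. r i - dist (c i) y < 0"
      using order_tendstoD(2)[OF gap, of 0] 2 by simp
    then show ?thesis
      by eventually_elim (use 2 in \<open>simp add: indicator_def\<close>)
  qed
qed

lemma integral_dominated_convergence_eventually:
  fixes f :: "'a \<Rightarrow> 'b::{banach, second_countable_topology}" and w :: "'a \<Rightarrow> real"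
  assumes "f \<in> borel_measurable M" "\<And>i. s i \<in> borel_measurable M" "integrable M w"
    and lim: "AE x in M. (\<lambda>i. s i x) \<longlonglongrightarrow> f x"
    and bound: "\<forall>\<^sub>F i in sequentially. AE x in M. norm (s i x) \<le> w x"
  shows "(\<lambda>i. integral\<^sup>L M (s i)) \<longlonglongrightarrow> integral\<^sup>L M f"
proof -
  obtain N where N: "\<And>i. N \<le> i \<Longrightarrow> AE x in M. norm (s i x) \<le> w x"
    using bound by (auto simp: eventually_sequentially)
  show ?thesis
  proof (rule LIMSEQ_offset[where k = N], rule integral_dominated_convergence)
    show "AE x in M. (\<lambda>i. s (i + N) x) \<longlonglongrightarrow> f x"
      using lim by eventually_elim (rule LIMSEQ_ignore_initial_segment)
    show "AE x in M. norm (s (i + N) x) \<le> w x" for i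
      by (rule N) simp
  qed fact+
qed

lemma isCont_set_integral_cball:
  fixes M :: "'a::metric_space measure" and h :: "'a \<Rightarrow> real"
  assumes mm: "metric_measure_space M" and rc: "ring_continuous M"
    and h: "h \<in> borel_measurable M" and bound: "AE y in M. \<bar>h y\<bar> \<le> C"
    and \<rho>: "isCont \<rho> x" and pos: "0 < \<rho> x"
  shows "isCont (\<lambda>z. set_lebesgue_integral M (cball z (\<rho> z)) h) x"
  unfolding continuous_at_sequentially comp_def set_lebesgue_integral_def
proof (intro allI impI)
  fix c assume c: "c \<longlonglongrightarrow> x"
  have r: "(\<lambda>i. \<rho> (c i)) \<longlonglongrightarrow> \<rho> x"
    using \<rho> c by (rule isCont_tendsto_compose)
  have sets: "sets M = sets borel"
    using mm by (rule metric_measure_space_sets_eq)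
  define R where "R = \<rho> x + 2"
  have near: "\<forall>\<^sub>F i in sequentially. cball (c i) (\<rho> (c i)) \<subseteq> cball x R"
    using tendstoD[OF c zero_less_one] order_tendstoD(2)[OF r less_add_one]
  proof eventually_elim
    case (elim i)
    show ?case
    proof
      fix z assume "z \<in> cball (c i) (\<rho> (c i))"
      with elim dist_triangle[of x z "c i"] show "z \<in> cball x R"
        by (simp add: R_def dist_commute)
    qed
  qed
  show "(\<lambda>i. LINT y|M. indicator (cball (c i) (\<rho> (c i))) y *\<^sub>R h y)
          \<longlonglongrightarrow> (LINT y|M. indicator (cball x (\<rho> x)) y *\<^sub>R h y)"
  proof (rule integral_dominated_convergence_eventually[where w = "\<lambda>y. C * indicator (cball x R) y"])
    show "integrable M (\<lambda>y. C * indicator (cball x R) y)"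
      using metric_measure_space_cball_fmeasurable[OF mm, of x R]
      by (intro integrable_mult_right integrable_real_indicator) (auto simp: fmeasurable_def)
    show "AE y in M. (\<lambda>i. indicator (cball (c i) (\<rho> (c i))) y *\<^sub>R h y)
            \<longlonglongrightarrow> indicator (cball x (\<rho> x)) y *\<^sub>R h y"
      using AE_not_in[OF ring_continuous_sphere_null[OF mm rc pos, of x]]
      by eventually_elim (auto intro!: tendsto_intros tendsto_indicator_cball c r)
    show "\<forall>\<^sub>F i in sequentially. AE y in M.
            norm (indicator (cball (c i) (\<rho> (c i))) y *\<^sub>R h y) \<le> C * indicator (cball x R) y"
      using near
    proof eventually_elim
      case (elim i)
      from bound show ?case
        by eventually_elim (use elim in \<open>auto simp: indicator_def\<close>)
    qed
  qed (use h sets in \<open>intro borel_measurable_scaleR borel_measurable_indicator; simp\<close>)+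
qed

lemma isCont_measure_cball:
  fixes M :: "'a::metric_space measure"
  assumes mm: "metric_measure_space M" and rc: "ring_continuous M"
    and \<rho>: "isCont \<rho> x" and pos: "0 < \<rho> x"
  shows "isCont (\<lambda>z. measure M (cball z (\<rho> z))) x"
proof -
  have "set_lebesgue_integral M (cball z (\<rho> z)) (\<lambda>_. 1::real) = measure M (cball z (\<rho> z))" for z
    using metric_measure_space_cball_fmeasurable[OF mm]
    by (simp add: set_integral_const fmeasurable_def less_top)
  then show ?thesis
    using isCont_set_integral_cball[OF mm rc _ _ \<rho> pos, of "\<lambda>_. 1" 1] by simp
qed

lemma Linfty_on_zero_extension:
  assumes "\<Omega> \<in> sets M" and "Linfty_on M \<Omega> u"
  shows "(\<lambda>y. indicator \<Omega> y * u y) \<in> borel_measurable M"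
    and "\<exists>C. AE y in M. \<bar>indicator \<Omega> y * u y\<bar> \<le> C"
proof -
  from assms(2) obtain C where u: "u \<in> borel_measurable (restrict_space M \<Omega>)"
    and C: "AE y in M. y \<in> \<Omega> \<longrightarrow> \<bar>u y\<bar> \<le> C"
    unfolding Linfty_on_def by blast
  show "(\<lambda>y. indicator \<Omega> y * u y) \<in> borel_measurable M"
    using u assms(1) sets.Int_space_eq2
    by (simp add: borel_measurable_restrict_space_iff)
  have "AE y in M. \<bar>indicator \<Omega> y * u y\<bar> \<le> \<bar>C\<bar>"
    using C by eventually_elim (auto simp: indicator_def)
  then show "\<exists>C. AE y in M. \<bar>indicator \<Omega> y * u y\<bar> \<le> C" ..
qed

theorem proposition3p4:
  fixes M :: "'a::metric_space measure" and \<Omega> :: "'a set" and \<rho> :: "'a \<Rightarrow> real"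
  assumes "metric_measure_space M"
    and "ring_continuous M"
    and "domain \<Omega>"
    and "admissible_radius \<Omega> \<rho>"
    and "Linfty_on M \<Omega> u"
  shows "continuous_on \<Omega> (avg_op M \<Omega> \<rho> u)"
proof -
  have "open \<Omega>"
    using assms(3) unfolding domain_def by simp
  have \<rho>: "continuous_on \<Omega> \<rho>" and pos: "\<And>x. x \<in> \<Omega> \<Longrightarrow> 0 < \<rho> x"
    using assms(4) closure_subset unfolding admissible_radius_def
    by (auto intro: continuous_on_subset)
  have "\<Omega> \<in> sets M"
    using metric_measure_space_sets_eq[OF assms(1)] \<open>open \<Omega>\<close> by simp
  from Linfty_on_zero_extension[OF this assms(5)] obtain C
    where f: "(\<lambda>y. indicator \<Omega> y * u y) \<in> borel_measurable M"
      and C: "AE y in M. \<bar>indicator \<Omega> y * u y\<bar> \<le> C"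
    by blast
  show ?thesis
    unfolding continuous_on_eq_continuous_at[OF \<open>open \<Omega>\<close>] avg_op_def
  proof
    fix x assume "x \<in> \<Omega>"
    then have "isCont \<rho> x"
      using \<rho> \<open>open \<Omega>\<close> by (simp add: continuous_on_eq_continuous_at)
    with pos[OF \<open>x \<in> \<Omega>\<close>] show "isCont (\<lambda>z. 1 / measure M (cball z (\<rho> z)) *
        set_lebesgue_integral M (cball z (\<rho> z)) (\<lambda>y. indicator \<Omega> y * u y)) x"
      using assms(1,2) f C metric_measure_space_measure_cball_pos[OF assms(1), of "\<rho> x" x]
      by (intro continuous_intros isCont_measure_cball isCont_set_integral_cball) auto
  qed
qed

end
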